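(* Let $(H_X,H_Z)$ be a CSS code with CSS logical basis $(L_X,L_Z)$ such that every vector in $\mathrm{rs}(H_X)+\mathrm{rs}(L_X)$ and every vector in $\mathrm{rs}(H_Z)+\mathrm{rs}(L_Z)$ has even Hamming weight. Let $\mathcal L\subseteq[k]\setminus\{1\}$ and $u=\sum_{j\in\mathcal L}(L_X)_j$, where $(L_X)_j$ is row $j$. Then for every $z\in(L_Z)_1+\mathrm{rs}(H_Z)$: (i) for every $x\in u+\mathrm{rs}(H_X)$, the Pauli operator $(x|z)$ (representing $\overline Z_1\overline X_{\mathcal L}$) has even weight $|x\vee z|$; (ii) for every $x\in (L_X)_1+u+\mathrm{rs}(H_X)$, the Pauli operator $(x|z)$ (representing $\overline Y_1\overline X_{\mathcal L}$ up to phase) has odd weight $|x\vee z|$.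
   Context: Conventions: arithmetic over $\mathbb F_2$, row vectors, $\mathrm{rs}$ = row space, $\ker M=\{v:Mv^T=0\}$. A CSS code is given by $H_X,H_Z$ with $H_XH_Z^T=0$, $k=n-\operatorname{rank}H_X-\operatorname{rank}H_Z$; a CSS logical basis is $L_X,L_Z\in\mathbb F_2^{k\times n}$ with rows of $L_X$ in $\ker H_Z$, rows of $L_Z$ in $\ker H_X$, $L_XL_Z^T=I_k$. A pair $(x|z)\in\mathbb F_2^{2n}$ represents the Pauli operator $\prod_iX_i^{x_i}Z_i^{z_i}$ up to phase; its weight is $|x\vee z|=\#\{i:x_i=1\text{ or }z_i=1\}$. *)

theory Defs
  imports "HOL-Library.Z2" "HOL-Library.Function_Algebras"
begin

text \<open>Vectors over F2 are functions nat => bit (bit is the field F2 from HOL-Library.Z2);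
  a vector of F2^n is one supported in the coordinates 0..n-1. A matrix with m rows is a
  function from row indices to row vectors, rows indexed 1..m as in the paper.\<close>

definition f2vec :: "nat \<Rightarrow> (nat \<Rightarrow> bit) \<Rightarrow> bool" where
  "f2vec n v \<longleftrightarrow> (\<forall>i\<ge>n. v i = 0)"

definition f2mat :: "nat \<Rightarrow> nat \<Rightarrow> (nat \<Rightarrow> nat \<Rightarrow> bit) \<Rightarrow> bool" where
  "f2mat m n M \<longleftrightarrow> (\<forall>i\<in>{1..m}. f2vec n (M i))"

definition dotp :: "nat \<Rightarrow> (nat \<Rightarrow> bit) \<Rightarrow> (nat \<Rightarrow> bit) \<Rightarrow> bit" where
  "dotp n v w = (\<Sum>i<n. v i * w i)"

definition rs :: "nat \<Rightarrow> (nat \<Rightarrow> nat \<Rightarrow> bit) \<Rightarrow> (nat \<Rightarrow> bit) set" where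
  "rs m M = {(\<Sum>i\<in>S. M i) | S. S \<subseteq> {1..m}}"

definition f2ker :: "nat \<Rightarrow> nat \<Rightarrow> (nat \<Rightarrow> nat \<Rightarrow> bit) \<Rightarrow> (nat \<Rightarrow> bit) set" where
  "f2ker m n M = {v. f2vec n v \<and> (\<forall>i\<in>{1..m}. dotp n (M i) v = 0)}"

definition rows_indep :: "(nat \<Rightarrow> nat \<Rightarrow> bit) \<Rightarrow> nat set \<Rightarrow> bool" where
  "rows_indep M S \<longleftrightarrow> (\<forall>T\<subseteq>S. T \<noteq> {} \<longrightarrow> (\<Sum>i\<in>T. M i) \<noteq> 0)"

definition f2rank :: "nat \<Rightarrow> (nat \<Rightarrow> nat \<Rightarrow> bit) \<Rightarrow> nat" where
  "f2rank m M = Max {card S | S. S \<subseteq> {1..m} \<and> rows_indep M S}"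

definition sumset :: "(nat \<Rightarrow> bit) set \<Rightarrow> (nat \<Rightarrow> bit) set \<Rightarrow> (nat \<Rightarrow> bit) set" where
  "sumset A B = {a + b | a b. a \<in> A \<and> b \<in> B}"

definition hw :: "nat \<Rightarrow> (nat \<Rightarrow> bit) \<Rightarrow> nat" where
  "hw n v = card {i. i < n \<and> v i \<noteq> 0}"

definition pauli_wt :: "nat \<Rightarrow> (nat \<Rightarrow> bit) \<Rightarrow> (nat \<Rightarrow> bit) \<Rightarrow> nat" where
  "pauli_wt n x z = card {i. i < n \<and> (x i \<noteq> 0 \<or> z i \<noteq> 0)}"

definition css_code :: "nat \<Rightarrow> nat \<Rightarrow> nat \<Rightarrow> nat \<Rightarrow> (nat \<Rightarrow> nat \<Rightarrow> bit) \<Rightarrow> (nat \<Rightarrow> nat \<Rightarrow> bit) \<Rightarrow> bool" where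
  "css_code n k mx mz HX HZ \<longleftrightarrow> f2mat mx n HX \<and> f2mat mz n HZ \<and>
     (\<forall>i\<in>{1..mx}. \<forall>j\<in>{1..mz}. dotp n (HX i) (HZ j) = 0) \<and>
     int k = int n - int (f2rank mx HX) - int (f2rank mz HZ)"

definition css_logical_basis :: "nat \<Rightarrow> nat \<Rightarrow> nat \<Rightarrow> nat \<Rightarrow> (nat \<Rightarrow> nat \<Rightarrow> bit) \<Rightarrow> (nat \<Rightarrow> nat \<Rightarrow> bit)
     \<Rightarrow> (nat \<Rightarrow> nat \<Rightarrow> bit) \<Rightarrow> (nat \<Rightarrow> nat \<Rightarrow> bit) \<Rightarrow> bool" where
  "css_logical_basis n k mx mz HX HZ LX LZ \<longleftrightarrow>
     (\<forall>j\<in>{1..k}. LX j \<in> f2ker mz n HZ) \<and> (\<forall>j\<in>{1..k}. LZ j \<in> f2ker mx n HX) \<and>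
     (\<forall>i\<in>{1..k}. \<forall>j\<in>{1..k}. dotp n (LX i) (LZ j) = (if i = j then 1 else 0))"

end

theory Submission
  imports Defs
begin

text \<open>Modulo 2, |x or z| = |x| + |z| - |x and z| is |x| + |z| + x.z. Both x and z have even
  weight by hypothesis, and the pairing kills every stabilizer contribution, so x.z only sees the
  pairing of the logical parts: it is 1 exactly when the logical X of qubit 1 occurs in x.\<close>

lemma of_nat_bit_eq: "(of_nat m :: bit) = (if even m then 0 else 1)"
  by (induction m) auto

lemma of_nat_card_bit: "(of_nat (card {i. i < (n::nat) \<and> P i}) :: bit) = (\<Sum>i<n. if P i then 1 else 0)"
proof (induction n)
  case 0
  then show ?case by simp
next
  case (Suc n)
  have "{i. i < Suc n \<and> P i} = (if P n then insert n {i. i < n \<and> P i} else {i. i < n \<and> P i})"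
    by (auto simp: less_Suc_eq)
  then show ?case using Suc by simp
qed

lemma of_nat_pauli_wt: "(of_nat (pauli_wt n x z) :: bit) = of_nat (hw n x) + of_nat (hw n z) + dotp n x z"
proof -
  have "(if x i \<noteq> 0 \<or> z i \<noteq> 0 then 1 else 0) =
      (if x i \<noteq> 0 then 1 else 0) + (if z i \<noteq> 0 then 1 else 0) + x i * z i" for i
    by (cases "x i"; cases "z i") auto
  then show ?thesis
    unfolding pauli_wt_def hw_def dotp_def of_nat_card_bit
    by (simp only: sum.distrib[symmetric])
qed

text \<open>The default simp set of type bit rewrites + and * into xor and and, so the algebra
  of dotp is done with \<open>simp only\<close>.\<close>

lemma dotp_zero_left: "dotp n 0 c = 0"
  unfolding dotp_def by (simp only: zero_fun_apply mult_zero_left sum.neutral_const)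

lemma dotp_add_left: "dotp n (a + b) c = dotp n a c + dotp n b c"
  unfolding dotp_def by (simp only: plus_fun_apply distrib_right sum.distrib)

lemma dotp_commute: "dotp n a b = dotp n b a"
  unfolding dotp_def by (simp only: mult.commute)

lemma dotp_add_right: "dotp n c (a + b) = dotp n c a + dotp n c b"
  by (simp only: dotp_commute[of n c] dotp_add_left)

lemma dotp_sum_left: "dotp n (\<Sum>i\<in>S. M i) c = (\<Sum>i\<in>S. dotp n (M i) c)"
proof (induction S rule: infinite_finite_induct)
  case (infinite S)
  then show ?case by (simp only: sum.infinite[OF infinite] dotp_zero_left)
next
  case empty
  then show ?case by (simp only: sum.empty dotp_zero_left)
next
  case (insert i S)
  then show ?case by (simp only: sum.insert[OF insert(1,2)] dotp_add_left insert.IH)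
qed

lemma dotp_rs_left_eq_0:
  assumes "a \<in> rs m M" and "\<forall>i\<in>{1..m}. dotp n (M i) b = 0"
  shows "dotp n a b = 0"
proof -
  obtain S where "S \<subseteq> {1..m}" and "a = (\<Sum>i\<in>S. M i)"
    using assms(1) unfolding rs_def by blast
  then show ?thesis
    using assms(2) by (auto simp: dotp_sum_left intro: sum.neutral)
qed

lemma dotp_rs_right_eq_0:
  assumes "b \<in> rs m M" and "\<forall>i\<in>{1..m}. dotp n a (M i) = 0"
  shows "dotp n a b = 0"
  using dotp_rs_left_eq_0[of b m M n a] assms by (simp add: dotp_commute)

lemma sum_rows_in_rs: "T \<subseteq> {1..m} \<Longrightarrow> (\<Sum>j\<in>T. M j) \<in> rs m M"
  unfolding rs_def by blast

lemma row_in_rs: "i \<in> {1..m} \<Longrightarrow> M i \<in> rs m M"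
  using sum_rows_in_rs[of "{i}" m M] by simp

lemma sumset_singleton_subset: "b \<in> B \<Longrightarrow> sumset {b} A \<subseteq> sumset A B"
  unfolding sumset_def by (auto simp: add.commute)

lemma css_dotp_logical_cosets:
  assumes code: "css_code n k mx mz HX HZ"
    and basis: "css_logical_basis n k mx mz HX HZ LX LZ"
    and i: "i \<in> {1..k}" and T: "T \<subseteq> {1..k}"
    and x: "x \<in> sumset {\<Sum>j\<in>T. LX j} (rs mx HX)"
    and z: "z \<in> sumset {LZ i} (rs mz HZ)"
  shows "dotp n x z = (if i \<in> T then 1 else 0)"
proof -
  obtain sx where sx: "sx \<in> rs mx HX" and x_eq: "x = (\<Sum>j\<in>T. LX j) + sx"
    using x unfolding sumset_def by blast
  obtain sz where sz: "sz \<in> rs mz HZ" and z_eq: "z = LZ i + sz"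
    using z unfolding sumset_def by blast
  have HX_HZ: "\<forall>r\<in>{1..mx}. \<forall>s\<in>{1..mz}. dotp n (HX r) (HZ s) = 0"
    using code unfolding css_code_def by blast
  have HZ_LX: "\<forall>j\<in>{1..k}. \<forall>s\<in>{1..mz}. dotp n (HZ s) (LX j) = 0"
    and HX_LZ: "\<forall>j\<in>{1..k}. \<forall>r\<in>{1..mx}. dotp n (HX r) (LZ j) = 0"
    and LX_LZ: "\<forall>j\<in>{1..k}. \<forall>l\<in>{1..k}. dotp n (LX j) (LZ l) = (if j = l then 1 else 0)"
    using basis unfolding css_logical_basis_def f2ker_def by blast+
  have "dotp n (\<Sum>j\<in>T. LX j) (LZ i) = (\<Sum>j\<in>T. if j = i then 1 else 0)"
    unfolding dotp_sum_left using T i LX_LZ by (intro sum.cong) auto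
  also have "\<dots> = (if i \<in> T then 1 else 0)"
    using T by (simp add: finite_subset)
  finally have logical: "dotp n (\<Sum>j\<in>T. LX j) (LZ i) = (if i \<in> T then 1 else 0)" .
  have LX_sz: "dotp n (LX j) sz = 0" if "j \<in> {1..k}" for j
    using HZ_LX that by (intro dotp_rs_right_eq_0[OF sz] ballI) (simp add: dotp_commute)
  have HX_sz: "dotp n (HX r) sz = 0" if "r \<in> {1..mx}" for r
    using dotp_rs_right_eq_0[OF sz] HX_HZ that by blast
  have "dotp n (\<Sum>j\<in>T. LX j) sz = 0"
    using dotp_rs_left_eq_0[OF sum_rows_in_rs[OF T]] LX_sz by blast
  moreover have "dotp n sx (LZ i) = 0"
    using dotp_rs_left_eq_0[OF sx] HX_LZ i by blast
  moreover have "dotp n sx sz = 0"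
    using dotp_rs_left_eq_0[OF sx] HX_sz by blast
  ultimately show ?thesis
    unfolding x_eq z_eq dotp_add_left dotp_add_right logical by simp
qed

lemma css_pauli_wt_even_iff:
  assumes code: "css_code n k mx mz HX HZ"
    and basis: "css_logical_basis n k mx mz HX HZ LX LZ"
    and evenX: "\<forall>v\<in>sumset (rs mx HX) (rs k LX). even (hw n v)"
    and evenZ: "\<forall>v\<in>sumset (rs mz HZ) (rs k LZ). even (hw n v)"
    and i: "i \<in> {1..k}" and T: "T \<subseteq> {1..k}"
    and x: "x \<in> sumset {\<Sum>j\<in>T. LX j} (rs mx HX)"
    and z: "z \<in> sumset {LZ i} (rs mz HZ)"
  shows "even (pauli_wt n x z) \<longleftrightarrow> i \<notin> T"
proof -
  have "even (hw n x)"
    using evenX x sumset_singleton_subset[OF sum_rows_in_rs[OF T]] by blast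
  moreover have "even (hw n z)"
    using evenZ z sumset_singleton_subset[OF row_in_rs[OF i]] by blast
  ultimately have "(of_nat (pauli_wt n x z) :: bit) = (if i \<in> T then 1 else 0)"
    using of_nat_pauli_wt[of n x z] css_dotp_logical_cosets[OF code basis i T x z]
    by (simp only: of_nat_bit_eq if_True add_0)
  then show ?thesis
    by (simp add: of_nat_bit_eq split: if_splits)
qed

theorem mainTheorem16:
  fixes n k mx mz :: nat and HX HZ LX LZ :: "nat \<Rightarrow> nat \<Rightarrow> bit" and \<L> :: "nat set"
  assumes code: "css_code n k mx mz HX HZ"
    and basis: "css_logical_basis n k mx mz HX HZ LX LZ"
    and k1: "1 \<le> k"
    and evenX: "\<forall>v\<in>sumset (rs mx HX) (rs k LX). even (hw n v)"
    and evenZ: "\<forall>v\<in>sumset (rs mz HZ) (rs k LZ). even (hw n v)"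
    and L: "\<L> \<subseteq> {1..k} - {1}"
  shows "\<forall>z\<in>sumset {LZ 1} (rs mz HZ).
           (\<forall>x\<in>sumset {\<Sum>j\<in>\<L>. LX j} (rs mx HX). even (pauli_wt n x z)) \<and>
           (\<forall>x\<in>sumset {LX 1 + (\<Sum>j\<in>\<L>. LX j)} (rs mx HX). odd (pauli_wt n x z))"
proof (intro ballI conjI)
  fix x z
  assume z: "z \<in> sumset {LZ 1} (rs mz HZ)"
  note parity = css_pauli_wt_even_iff[OF code basis evenX evenZ _ _ _ z]
  have one: "1 \<in> {1..k}" and L_sub: "\<L> \<subseteq> {1..k}" and one_notin: "1 \<notin> \<L>"
    using k1 L by auto
  show "even (pauli_wt n x z)" if "x \<in> sumset {\<Sum>j\<in>\<L>. LX j} (rs mx HX)"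
    using parity[OF one L_sub that] one_notin by blast
  have "(\<Sum>j\<in>insert 1 \<L>. LX j) = LX 1 + (\<Sum>j\<in>\<L>. LX j)"
    using one_notin L by (simp add: finite_subset)
  moreover have "insert 1 \<L> \<subseteq> {1..k}"
    using one L_sub by blast
  ultimately show "odd (pauli_wt n x z)" if "x \<in> sumset {LX 1 + (\<Sum>j\<in>\<L>. LX j)} (rs mx HX)"
    using parity[OF one, of "insert 1 \<L>" x] that by simp
qed

end
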